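(* As Laurent series in $z$, $$\sum_{n\ge0}\binom{2n}{n}z^n=\left(9\frac{1+z}{1-z}+3\right)\Psi(-z)-(4z+8)\Psi^3(-z)-\left(12z^2+12z+3\right)\Psi^5(-z)\quad\text{modulo }27.$$
   Context: $\Psi(z)=\prod_{j\ge0}(1+z^{3^j})$, so $\Psi(-z)=\prod_{j\ge0}(1-z^{3^j})$. Rational functions are expanded as power series in $z$; "modulo $27$" means coefficientwise congruence. *)

theory Defs
  imports "HOL-Computational_Algebra.Formal_Power_Series" "HOL-Number_Theory.Cong"
begin

text \<open>Psi(-z) = prod_{j>=0} (1 - z^(3^j)) as a formal power series over int.
  The n-th coefficient of the infinite product equals the n-th coefficient of the
  finite partial product over j < n+1 (all further factors are 1 + O(z^(n+1))).\<close>
definition Psi_neg :: "int fps" where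
  "Psi_neg = Abs_fps (\<lambda>n. fps_nth (\<Prod>j<Suc n. (1 - fps_X ^ (3 ^ j))) n)"

definition geom :: "int fps" where
  "geom = Abs_fps (\<lambda>_. 1)"

lemma geom_inverse: "(1 - fps_X) * geom = 1"
proof -
  have "fps_X * geom = geom - 1"
    by (simp add: geom_def fps_eq_iff fps_X_mult_nth)
  then show ?thesis by (simp add: algebra_simps)
qed

definition central_binom_fps :: "int fps" where
  "central_binom_fps = Abs_fps (\<lambda>n. int ((2 * n) choose n))"

end

theory Submission
  imports Defs
begin

text \<open>
  Write \<open>P = \<Psi>(-z)\<close>. Since \<open>P(z) = (1 - z) P(z\<^sup>3)\<close> and \<open>P(z)\<^sup>3 \<equiv> P(z\<^sup>3)\<close>
  modulo 3, cancelling \<open>P\<close> gives \<open>(1 - z) P\<^sup>2 = 1 + 3B\<close> for an integer series \<open>B\<close>.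
  Substituting this into the right-hand side \<open>R\<close>, a polynomial identity in \<open>z\<close> and \<open>B\<close>
  shows \<open>(1 - 4z) R\<^sup>2 \<equiv> 1\<close> modulo 27. The central binomial series \<open>C\<close> satisfies
  \<open>(1 - 4z) C\<^sup>2 = 1\<close>, so 27 divides \<open>(R - C) (1 - 4z) (R + C)\<close>; the second factor has
  constant term 2, a unit modulo 27, hence \<open>R \<equiv> C\<close>.
\<close>

unbundle fps_syntax

lemma fps_const_dvd_iff:
  fixes m :: "'a::comm_ring_1"
  shows "fps_const m dvd f \<longleftrightarrow> (\<forall>n. m dvd f $ n)"
proof
  assume "fps_const m dvd f"
  then obtain g where "f = fps_const m * g" ..
  then show "\<forall>n. m dvd f $ n" by simp
next
  assume "\<forall>n. m dvd f $ n"
  then obtain q where "\<forall>n. f $ n = m * q n" unfolding dvd_def by metis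
  then have "f = fps_const m * Abs_fps q" by (simp add: fps_eq_iff)
  then show "fps_const m dvd f" by simp
qed

lemma fps_const_dvd_mult_cancel:
  fixes m :: "'a::ring_gcd"
  assumes dvd: "fps_const m dvd f * g" and coprime: "coprime m (g $ 0)"
  shows "fps_const m dvd f"
  unfolding fps_const_dvd_iff
proof
  fix n show "m dvd f $ n"
  proof (induction n rule: less_induct)
    case (less n)
    have "(f * g) $ n = (\<Sum>i<n. f $ i * g $ (n - i)) + f $ n * g $ 0"
      by (simp add: fps_mult_nth atLeast0AtMost lessThan_Suc_atMost[symmetric])
    moreover have "m dvd (\<Sum>i<n. f $ i * g $ (n - i))"
      using less by (auto intro!: dvd_sum)
    moreover have "m dvd (f * g) $ n"
      using dvd by (simp add: fps_const_dvd_iff)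
    ultimately have "m dvd f $ n * g $ 0"
      by (metis dvd_add_right_iff)
    then show ?case
      using coprime by (simp add: coprime_dvd_mult_left_iff)
  qed
qed

lemma fps_X_power_dvd_iff:
  fixes f :: "'a::comm_ring_1 fps"
  shows "fps_X ^ n dvd f \<longleftrightarrow> (\<forall>k<n. f $ k = 0)"
proof
  assume "fps_X ^ n dvd f"
  then obtain g where "f = fps_X ^ n * g" ..
  then show "\<forall>k<n. f $ k = 0" by (simp add: fps_X_power_mult_nth)
next
  assume "\<forall>k<n. f $ k = 0"
  then have "fps_cutoff n f = 0" by (simp add: fps_eq_iff)
  then have "f = fps_X ^ n * fps_shift n f"
    using fps_shift_cutoff'[of n f] by simp
  then show "fps_X ^ n dvd f" by (metis dvd_triv_left)
qed

lemma fps_nth_eq_if_fps_X_power_dvd_diff: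
  fixes f g :: "'a::comm_ring_1 fps"
  assumes "fps_X ^ n dvd f - g" and "k < n"
  shows "f $ k = g $ k"
  using assms by (simp add: fps_X_power_dvd_iff)

lemma dvd_prod_diff:
  fixes f g :: "'b \<Rightarrow> 'a::comm_ring_1"
  assumes "\<And>j. j \<in> A \<Longrightarrow> m dvd f j - g j"
  shows "m dvd prod f A - prod g A"
  using assms
proof (induction A rule: infinite_finite_induct)
  case (insert j A)
  have "prod f (insert j A) - prod g (insert j A)
      = (f j - g j) * prod f A + g j * (prod f A - prod g A)"
    using insert.hyps by (simp add: algebra_simps)
  then show ?case
    using insert.prems insert.IH by (simp add: dvd_add dvd_mult dvd_mult2)
qed simp_all

lemma Suc_times_central_binomial_Suc:
  "Suc n * (2 * Suc n choose Suc n) = 2 * (2 * n + 1) * (2 * n choose n)"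
proof -
  have sym: "(Suc (2 * n) choose n) = (Suc (2 * n) choose Suc n)"
    using binomial_symmetric[of n "Suc (2 * n)"]
    by (simp add: Suc_diff_le del: binomial_Suc_Suc)
  have "Suc n * (Suc n * (2 * Suc n choose Suc n))
      = Suc n * (2 * Suc n * (Suc (2 * n) choose n))"
    using Suc_times_binomial[of n "Suc (2 * n)"] by (simp del: binomial_Suc_Suc)
  also have "\<dots> = 2 * Suc n * (Suc n * (Suc (2 * n) choose Suc n))"
    unfolding sym by (simp only: ac_simps)
  also have "\<dots> = Suc n * (2 * (2 * n + 1) * (2 * n choose n))"
    unfolding Suc_times_binomial by simp
  finally show ?thesis
    by (metis mult_left_cancel nat.simps(3))
qed

lemma central_binom_fps_deriv:
  "(1 - 4 * fps_X) * fps_deriv central_binom_fps = 2 * central_binom_fps"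
proof (rule fps_ext)
  fix n
  have rec: "int (Suc n) * int (2 * Suc n choose Suc n)
      = 2 * (2 * int n + 1) * int (2 * n choose n)"
    using arg_cong[OF Suc_times_central_binomial_Suc[of n], of int]
    by (simp add: algebra_simps del: binomial_Suc_Suc)
  show "((1 - 4 * fps_X) * fps_deriv central_binom_fps) $ n = (2 * central_binom_fps) $ n"
  proof (cases n)
    case 0 then show ?thesis by (simp add: central_binom_fps_def numeral_fps_const)
  next
    case (Suc m)
    then show ?thesis
      using rec
      by (simp add: central_binom_fps_def numeral_fps_const algebra_simps del: binomial_Suc_Suc)
  qed
qed

lemma central_binom_fps_square: "(1 - 4 * fps_X) * central_binom_fps ^ 2 = 1"
proof -
  let ?C = central_binom_fps
  let ?D = "(1 - 4 * fps_X) * ?C ^ 2"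
  have "fps_deriv ?D = 2 * ?C * ((1 - 4 * fps_X) * fps_deriv ?C) - 4 * ?C ^ 2"
    by (simp add: fps_deriv_power algebra_simps power2_eq_square)
  also have "\<dots> = 0"
    by (simp add: central_binom_fps_deriv power2_eq_square)
  finally have "?D = fps_const (?D $ 0)"
    by (simp only: fps_deriv_eq_0_iff)
  then show ?thesis
    by (simp add: central_binom_fps_def fps_power_zeroth)
qed

definition Psi_neg_partial :: "nat \<Rightarrow> int fps" where
  "Psi_neg_partial N = (\<Prod>j<N. 1 - fps_X ^ 3 ^ j)"

lemma Psi_neg_partial_Suc:
  "Psi_neg_partial (Suc N) = Psi_neg_partial N * (1 - fps_X ^ 3 ^ N)"
  by (simp add: Psi_neg_partial_def)

lemma Psi_neg_partial_nth_0 [simp]: "Psi_neg_partial N $ 0 = 1"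
  unfolding Psi_neg_partial_def by (induction N) simp_all

lemma fps_X_power_dvd_Psi_neg_partial_diff:
  assumes "m \<le> M"
  shows "fps_X ^ m dvd Psi_neg_partial M - Psi_neg_partial m"
  using assms
proof (induction M rule: dec_induct)
  case (step M)
  have "m < 3 ^ M"
    using step.hyps power_gt_expt[of 3 M] by simp
  then have "fps_X ^ m dvd (fps_X ^ 3 ^ M :: int fps)"
    by (simp add: le_imp_power_dvd)
  moreover have "Psi_neg_partial (Suc M) - Psi_neg_partial m
      = (Psi_neg_partial M - Psi_neg_partial m) - fps_X ^ 3 ^ M * Psi_neg_partial M"
    by (simp add: Psi_neg_partial_Suc algebra_simps)
  ultimately show ?case
    using step.IH by (metis dvd_diff dvd_mult2)
qed simp

lemma fps_X_power_dvd_Psi_neg_diff: "fps_X ^ N dvd Psi_neg - Psi_neg_partial N"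
  unfolding fps_X_power_dvd_iff
proof (intro allI impI)
  fix k assume "k < N"
  then have "fps_X ^ Suc k dvd Psi_neg_partial N - Psi_neg_partial (Suc k)"
    by (intro fps_X_power_dvd_Psi_neg_partial_diff) simp
  then have "Psi_neg_partial N $ k = Psi_neg_partial (Suc k) $ k"
    by (rule fps_nth_eq_if_fps_X_power_dvd_diff) simp
  then show "(Psi_neg - Psi_neg_partial N) $ k = 0"
    by (simp add: Psi_neg_def Psi_neg_partial_def)
qed

lemma Psi_neg_partial_cube_cong:
  "3 dvd Psi_neg_partial N ^ 3 - (\<Prod>j<N. 1 - fps_X ^ 3 ^ Suc j)"
proof -
  have "3 dvd (1 - y) ^ 3 - (1 - y ^ 3)" for y :: "int fps"
  proof
    show "(1 - y) ^ 3 - (1 - y ^ 3) = 3 * (y ^ 2 - y)" by algebra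
  qed
  then have "3 dvd (1 - fps_X ^ 3 ^ j) ^ 3 - (1 - fps_X ^ 3 ^ Suc j :: int fps)" for j
    by (metis power_Suc power_mult mult.commute)
  then show ?thesis
    unfolding Psi_neg_partial_def prod_power_distrib by (rule dvd_prod_diff)
qed

lemma Psi_neg_partial_square_cong:
  "3 dvd (1 - fps_X) * Psi_neg_partial N ^ 2 - (1 - fps_X ^ 3 ^ N)"
proof -
  have "Psi_neg_partial (Suc N) = (1 - fps_X) * (\<Prod>j<N. 1 - fps_X ^ 3 ^ Suc j)"
    unfolding Psi_neg_partial_def prod.lessThan_Suc_shift by simp
  then have "((1 - fps_X) * Psi_neg_partial N ^ 2 - (1 - fps_X ^ 3 ^ N)) * Psi_neg_partial N
      = (1 - fps_X) * (Psi_neg_partial N ^ 3 - (\<Prod>j<N. 1 - fps_X ^ 3 ^ Suc j))"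
    by (simp add: Psi_neg_partial_Suc algebra_simps power2_eq_square power3_eq_cube)
  then have "fps_const 3 dvd
      ((1 - fps_X) * Psi_neg_partial N ^ 2 - (1 - fps_X ^ 3 ^ N)) * Psi_neg_partial N"
    using Psi_neg_partial_cube_cong by (simp add: numeral_fps_const[symmetric])
  then show ?thesis
    unfolding numeral_fps_const by (rule fps_const_dvd_mult_cancel) simp
qed

lemma Psi_neg_square_cong: "3 dvd (1 - fps_X) * Psi_neg ^ 2 - 1"
  unfolding numeral_fps_const fps_const_dvd_iff
proof
  fix n
  let ?P = "Psi_neg_partial (Suc n)"
  have "((1 - fps_X) * Psi_neg ^ 2 - 1) - ((1 - fps_X) * ?P ^ 2 - (1 - fps_X ^ 3 ^ Suc n))
      = (Psi_neg - ?P) * ((1 - fps_X) * (Psi_neg + ?P)) - fps_X ^ 3 ^ Suc n"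
    by (simp add: algebra_simps power2_eq_square)
  moreover have "fps_X ^ Suc n dvd (Psi_neg - ?P) * ((1 - fps_X) * (Psi_neg + ?P))"
    using fps_X_power_dvd_Psi_neg_diff by (rule dvd_mult2)
  moreover have "fps_X ^ Suc n dvd (fps_X ^ 3 ^ Suc n :: int fps)"
    by (intro le_imp_power_dvd less_imp_le power_gt_expt) simp
  ultimately have "fps_X ^ Suc n dvd ((1 - fps_X) * Psi_neg ^ 2 - 1)
      - ((1 - fps_X) * ?P ^ 2 - (1 - fps_X ^ 3 ^ Suc n))"
    by (metis dvd_diff)
  then have "((1 - fps_X) * Psi_neg ^ 2 - 1) $ n
      = ((1 - fps_X) * ?P ^ 2 - (1 - fps_X ^ 3 ^ Suc n)) $ n"
    by (rule fps_nth_eq_if_fps_X_power_dvd_diff) simp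
  moreover have "3 dvd ((1 - fps_X) * ?P ^ 2 - (1 - fps_X ^ 3 ^ Suc n)) $ n"
    using Psi_neg_partial_square_cong unfolding numeral_fps_const fps_const_dvd_iff ..
  ultimately show "3 dvd ((1 - fps_X) * Psi_neg ^ 2 - 1) $ n"
    using power_gt_expt[of 3 "Suc n"] by simp
qed

text \<open>The argument \<open>g\<close> stands for \<open>1/(1 - z)\<close> and \<open>P\<close> for \<open>\<Psi>(-z)\<close>.\<close>

definition psi_rhs :: "'a::comm_ring_1 \<Rightarrow> 'a \<Rightarrow> 'a \<Rightarrow> 'a" where
  "psi_rhs z g P = (9 * ((1 + z) * g) + 3) * P - (4 * z + 8) * P ^ 3
                   - (12 * z ^ 2 + 12 * z + 3) * P ^ 5"

lemma psi_rhs_quotient_identity: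
  fixes z B :: "'a::idom"
  shows "(1 - 4 * z) * (1 + 3 * B)
      * (2 * (2 + z) * (1 - z) * (1 - 6 * B) - 3 * (2 * z + 1) ^ 2 * (1 + 3 * B) ^ 2) ^ 2 - (1 - z) ^ 5
    = 27 * ((- z + 10*z^2 - 10*z^3 - 51*z^4 - 29*z^5)
      + B * (- 3 + 48*z - 24*z^2 - 312*z^3 - 588*z^4 - 336*z^5)
      + B^2 * (54 + 108*z - 540*z^2 - 2160*z^3 - 3024*z^4 - 1728*z^5)
      + B^3 * (274 - 20*z - 2012*z^2 - 6736*z^3 - 8512*z^4 - 4864*z^5)
      + B^4 * (279 + 468*z - 2880*z^2 - 10080*z^3 - 13104*z^4 - 7488*z^5)
      + B^5 * (81 + 324*z - 648*z^2 - 5184*z^3 - 9072*z^4 - 5184*z^5))"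
  by algebra

lemma psi_rhs_square_cong:
  fixes z g P B :: "'a::idom"
  assumes g: "(1 - z) * g = 1" and P: "(1 - z) * P ^ 2 = 1 + 3 * B"
  shows "27 dvd (1 - 4 * z) * psi_rhs z g P ^ 2 - 1"
proof -
  define T where
    "T = 2 * (2 + z) * (1 - z) * (1 - 6 * B) - 3 * (2 * z + 1) ^ 2 * (1 + 3 * B) ^ 2"
  have "(1 - z) ^ 2 * psi_rhs z g P = P * T"
    unfolding psi_rhs_def T_def using g P by algebra
  then have "(1 - z) ^ 5 * ((1 - 4 * z) * psi_rhs z g P ^ 2 - 1)
      = (1 - 4 * z) * (1 + 3 * B) * T ^ 2 - (1 - z) ^ 5"
    using P by algebra
  moreover obtain Q where "(1 - 4 * z) * (1 + 3 * B) * T ^ 2 - (1 - z) ^ 5 = 27 * Q"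
    unfolding T_def psi_rhs_quotient_identity by blast
  ultimately have "(1 - 4 * z) * psi_rhs z g P ^ 2 - 1 = 27 * (g ^ 5 * Q)"
    using g by algebra
  then show ?thesis ..
qed

theorem theorem12p2:
  shows "\<forall>n. [fps_nth central_binom_fps n =
     fps_nth ((9 * ((1 + fps_X) * geom) + 3) * Psi_neg
              - (4 * fps_X + 8) * Psi_neg ^ 3
              - (12 * fps_X ^ 2 + 12 * fps_X + 3) * Psi_neg ^ 5) n] (mod 27)"
proof -
  let ?C = central_binom_fps
  define R where "R = psi_rhs fps_X geom Psi_neg"
  obtain B where "(1 - fps_X) * Psi_neg ^ 2 = 1 + 3 * B"
    using Psi_neg_square_cong by (metis dvdE diff_eq_eq add.commute)
  with geom_inverse have "27 dvd (1 - 4 * fps_X) * R ^ 2 - 1"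
    unfolding R_def by (rule psi_rhs_square_cong)
  also have "(1 - 4 * fps_X) * R ^ 2 - 1 = (R - ?C) * ((1 - 4 * fps_X) * (R + ?C))"
    using central_binom_fps_square by algebra
  finally have dvd: "fps_const 27 dvd (R - ?C) * ((1 - 4 * fps_X) * (R + ?C))"
    by (simp add: numeral_fps_const)
  have const_term: "((1 - 4 * fps_X) * (R + ?C)) $ 0 = 2"
  proof -
    have "Psi_neg $ 0 = 1" "geom $ 0 = 1" "?C $ 0 = 1"
      by (simp_all add: Psi_neg_def geom_def central_binom_fps_def)
    then show ?thesis
      by (simp add: R_def psi_rhs_def fps_power_zeroth)
  qed
  have "fps_const 27 dvd R - ?C"
    using fps_const_dvd_mult_cancel[OF dvd] const_term by simp
  then show ?thesis
    unfolding fps_const_dvd_iff R_def psi_rhs_def cong_iff_dvd_diff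
    by (metis fps_sub_nth dvd_diff_commute)
qed

end
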